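(* For every $s\in S$ and $\tau\in\mathcal K^J$, one has $\mathrm{ht}(s\tau)=\mathrm{ht}(\tau)$ if and only if $s\tau=\tau$.
   Context: Let $(W,S)$ be a finite Coxeter system with length function $\ell$, Bruhat order $\le$, and reflections $T=\{wsw^{-1}:w\in W,s\in S\}$. Let $\mathrm{Aut}(W,S)$ be the automorphisms $\varphi$ of $W$ with $\varphi(S)=S$, and $W^+=W\rtimes\mathrm{Aut}(W,S)$ the group of pairs $(w,\varphi)$ with $(v,\alpha)(w,\beta)=(v\,\alpha(w),\alpha\beta)$; set $\ell(w,\varphi)=\ell(w)$ and identify $w$ with $(w,1)$. $z\in W^+$ is a perfect involution if $z^2=1$ and $(zt)^4=1$ for all $t\in T$. For $J\subseteq S$: $W_J=\langle J\rangle$; $\mathscr I_J$ is the set of perfect involutions of $(W_J)^+=W_J\rtimes\mathrm{Aut}(W_J,J)$, on which $W_J$ acts by $v:(y,\theta)\mapsto(v\,y\,\theta(v)^{-1},\theta)$; $z\in\mathscr I_J$ is $W_J$-minimal if $\ell(szs)\ge\ell(z)$ for all $s\in J$ (each $W_J$-conjugacy class in $\mathscr I_J$ has a unique $W_J$-minimal element). $W^J=\{w\in W:\ell(ws)>\ell(w)\ \forall s\in J\}$, $\mathcal K^J=W^J\times\mathscr I_J$. For $\tau=(w,z)\in\mathcal K^J$, $\mathrm{ht}(\tau)=\ell(w)+\tfrac12(\ell(z)-\ell(z_{\min}))$ with $z_{\min}$ the $W_J$-minimal conjugate of $z$. For $s\in S$: $s\tau=(sw,z)$ if $sw\in W^J$;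 otherwise $t:=w^{-1}sw\in J$ and $s\tau=(w,tzt)$. This extends to an action of $W$ on $\mathcal K^J$. *)

theory Defs
  imports "HOL-Algebra.Algebra"
begin

definition word_prod :: "('w, 'b) monoid_scheme \<Rightarrow> 'w list \<Rightarrow> 'w" where
  "word_prod G ws = foldr (\<lambda>x y. x \<otimes>\<^bsub>G\<^esub> y) ws \<one>\<^bsub>G\<^esub>"

definition cox_relators :: "('w, 'b) monoid_scheme \<Rightarrow> 'w set \<Rightarrow> 'w list set" where
  "cox_relators G S =
     {[s, s] | s. s \<in> S} \<union>
     {concat (replicate (group.ord G (s \<otimes>\<^bsub>G\<^esub> t)) [s, t]) | s t. s \<in> S \<and> t \<in> S}"

definition cox_step :: "('w, 'b) monoid_scheme \<Rightarrow> 'w set \<Rightarrow> 'w list \<Rightarrow> 'w list \<Rightarrow> bool" where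
  "cox_step G S u v \<longleftrightarrow> (\<exists>xs ys r. r \<in> cox_relators G S \<and> u = xs @ ys \<and> v = xs @ r @ ys)"

definition cox_equiv :: "('w, 'b) monoid_scheme \<Rightarrow> 'w set \<Rightarrow> 'w list \<Rightarrow> 'w list \<Rightarrow> bool" where
  "cox_equiv G S = (\<lambda>u v. cox_step G S u v \<or> cox_step G S v u)\<^sup>*\<^sup>*"

text \<open>(G,S) is a Coxeter system: S is a set of involutions generating G, and
  every word over S whose product is trivial is a consequence of the Coxeter
  relations, i.e. G = < S | s^2, (st)^m(s,t) >.\<close>
definition coxeter_system :: "('w, 'b) monoid_scheme \<Rightarrow> 'w set \<Rightarrow> bool" where
  "coxeter_system G S \<longleftrightarrow>
     group G \<and> S \<subseteq> carrier G \<and> \<one>\<^bsub>G\<^esub> \<notin> S \<and>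
     (\<forall>s\<in>S. s \<otimes>\<^bsub>G\<^esub> s = \<one>\<^bsub>G\<^esub>) \<and>
     generate G S = carrier G \<and>
     (\<forall>ws \<in> lists S. word_prod G ws = \<one>\<^bsub>G\<^esub> \<longrightarrow> cox_equiv G S ws [])"

definition cox_length :: "('w, 'b) monoid_scheme \<Rightarrow> 'w set \<Rightarrow> 'w \<Rightarrow> nat" where
  "cox_length G S w = (LEAST n. \<exists>ws \<in> lists S. length ws = n \<and> word_prod G ws = w)"

definition parabolic :: "('w, 'b) monoid_scheme \<Rightarrow> 'w set \<Rightarrow> 'w set" where
  "parabolic G J = generate G J"

definition reflections :: "('w, 'b) monoid_scheme \<Rightarrow> 'w set \<Rightarrow> 'w set" where
  "reflections G J = {v \<otimes>\<^bsub>G\<^esub> s \<otimes>\<^bsub>G\<^esub> inv\<^bsub>G\<^esub> v | v s. v \<in> parabolic G J \<and> s \<in> J}"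

definition diagram_auts :: "('w, 'b) monoid_scheme \<Rightarrow> 'w set \<Rightarrow> ('w \<Rightarrow> 'w) set" where
  "diagram_auts G J =
     {\<theta>. \<theta> \<in> iso (G\<lparr>carrier := parabolic G J\<rparr>) (G\<lparr>carrier := parabolic G J\<rparr>) \<and>
          \<theta> \<in> extensional (parabolic G J) \<and> \<theta> ` J = J}"

text \<open>Elements of (W_J)^+ = W_J \<rtimes> Aut(W_J,J).\<close>
definition plus_carrier :: "('w, 'b) monoid_scheme \<Rightarrow> 'w set \<Rightarrow> ('w \<times> ('w \<Rightarrow> 'w)) set" where
  "plus_carrier G J = parabolic G J \<times> diagram_auts G J"

definition plus_mult :: "('w, 'b) monoid_scheme \<Rightarrow> 'w set \<Rightarrow>
    'w \<times> ('w \<Rightarrow> 'w) \<Rightarrow> 'w \<times> ('w \<Rightarrow> 'w) \<Rightarrow> 'w \<times> ('w \<Rightarrow> 'w)" where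
  "plus_mult G J x y =
     (fst x \<otimes>\<^bsub>G\<^esub> snd x (fst y), compose (parabolic G J) (snd x) (snd y))"

definition plus_one :: "('w, 'b) monoid_scheme \<Rightarrow> 'w set \<Rightarrow> 'w \<times> ('w \<Rightarrow> 'w)" where
  "plus_one G J = (\<one>\<^bsub>G\<^esub>, restrict id (parabolic G J))"

definition plus_embed :: "('w, 'b) monoid_scheme \<Rightarrow> 'w set \<Rightarrow> 'w \<Rightarrow> 'w \<times> ('w \<Rightarrow> 'w)" where
  "plus_embed G J w = (w, restrict id (parabolic G J))"

definition perfect_involutions :: "('w, 'b) monoid_scheme \<Rightarrow> 'w set \<Rightarrow> ('w \<times> ('w \<Rightarrow> 'w)) set" where
  "perfect_involutions G J =
     {z \<in> plus_carrier G J. plus_mult G J z z = plus_one G J \<and>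
        (\<forall>t \<in> reflections G J.
           (let u = plus_mult G J z (plus_embed G J t);
                u2 = plus_mult G J u u
            in plus_mult G J u2 u2 = plus_one G J))}"

definition twisted_act :: "('w, 'b) monoid_scheme \<Rightarrow> 'w \<Rightarrow> 'w \<times> ('w \<Rightarrow> 'w) \<Rightarrow> 'w \<times> ('w \<Rightarrow> 'w)" where
  "twisted_act G v z = (v \<otimes>\<^bsub>G\<^esub> fst z \<otimes>\<^bsub>G\<^esub> inv\<^bsub>G\<^esub> (snd z v), snd z)"

definition plus_length :: "('w, 'b) monoid_scheme \<Rightarrow> 'w set \<Rightarrow> 'w \<times> ('w \<Rightarrow> 'w) \<Rightarrow> nat" where
  "plus_length G S z = cox_length G S (fst z)"

definition WJ_minimal :: "('w, 'b) monoid_scheme \<Rightarrow> 'w set \<Rightarrow> 'w set \<Rightarrow> 'w \<times> ('w \<Rightarrow> 'w) \<Rightarrow> bool" where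
  "WJ_minimal G S J z \<longleftrightarrow> z \<in> perfect_involutions G J \<and>
     (\<forall>s\<in>J. plus_length G S (plus_mult G J (plus_mult G J (plus_embed G J s) z) (plus_embed G J s))
             \<ge> plus_length G S z)"

text \<open>The (unique) W_J-minimal element of the W_J-conjugacy class of z.\<close>
definition min_conj :: "('w, 'b) monoid_scheme \<Rightarrow> 'w set \<Rightarrow> 'w set \<Rightarrow> 'w \<times> ('w \<Rightarrow> 'w) \<Rightarrow> 'w \<times> ('w \<Rightarrow> 'w)" where
  "min_conj G S J z =
     (THE z'. (\<exists>v \<in> parabolic G J. z' = twisted_act G v z) \<and> WJ_minimal G S J z')"

definition min_coset_reps :: "('w, 'b) monoid_scheme \<Rightarrow> 'w set \<Rightarrow> 'w set \<Rightarrow> 'w set" where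
  "min_coset_reps G S J =
     {w \<in> carrier G. \<forall>s\<in>J. cox_length G S (w \<otimes>\<^bsub>G\<^esub> s) > cox_length G S w}"

definition KJ :: "('w, 'b) monoid_scheme \<Rightarrow> 'w set \<Rightarrow> 'w set \<Rightarrow> ('w \<times> ('w \<times> ('w \<Rightarrow> 'w))) set" where
  "KJ G S J = min_coset_reps G S J \<times> perfect_involutions G J"

definition ht :: "('w, 'b) monoid_scheme \<Rightarrow> 'w set \<Rightarrow> 'w set \<Rightarrow> 'w \<times> ('w \<times> ('w \<Rightarrow> 'w)) \<Rightarrow> real" where
  "ht G S J \<tau> = real (cox_length G S (fst \<tau>)) +
     (real (plus_length G S (snd \<tau>)) - real (plus_length G S (min_conj G S J (snd \<tau>)))) / 2"

definition simple_act :: "('w, 'b) monoid_scheme \<Rightarrow> 'w set \<Rightarrow> 'w set \<Rightarrow> 'w \<Rightarrow>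
    'w \<times> ('w \<times> ('w \<Rightarrow> 'w)) \<Rightarrow> 'w \<times> ('w \<times> ('w \<Rightarrow> 'w))" where
  "simple_act G S J s \<tau> =
     (let w = fst \<tau>; z = snd \<tau> in
      if s \<otimes>\<^bsub>G\<^esub> w \<in> min_coset_reps G S J then (s \<otimes>\<^bsub>G\<^esub> w, z)
      else (let t = inv\<^bsub>G\<^esub> w \<otimes>\<^bsub>G\<^esub> s \<otimes>\<^bsub>G\<^esub> w in
            (w, plus_mult G J (plus_mult G J (plus_embed G J t) z) (plus_embed G J t))))"

end

theory Submission
  imports Defs
begin

text \<open>The reflection sequence of a word \<open>s\<^sub>1 \<dots> s\<^sub>k\<close> lists the reflections
  \<open>s\<^sub>1 \<cdots> s\<^sub>i\<^sub>-\<^sub>1 s\<^sub>i s\<^sub>i\<^sub>-\<^sub>1 \<cdots> s\<^sub>1\<close>.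
  Every Coxeter relator has a reflection sequence in which each reflection occurs an even number
  of times, so by the presentation the parity of the number of occurrences of a reflection \<open>t\<close>
  depends only on the product \<open>w\<close> of the word. The reflections of odd parity form a set \<open>N(w)\<close>;
  a reduced word has a repetition-free reflection sequence, so \<open>|N(w)| = \<ell>(w)\<close>, and
  \<open>N(ws)\<close>, \<open>N(sw)\<close> arise from \<open>N(w)\<close> by a symmetric difference with one reflection. This gives
  the exchange behaviour of lengths and Deodhar's lemma: if \<open>w \<in> W\<^sup>J\<close> and \<open>sw \<notin> W\<^sup>J\<close>, then
  \<open>t = w\<^sup>-\<^sup>1sw \<in> J\<close>. So \<open>s\<tau>\<close> either changes \<open>\<ell>(w)\<close> by one, or replaces \<open>z = (y,\<theta>)\<close> by the
  \<open>W\<^sub>J\<close>-conjugate \<open>(t y \<theta>(t), \<theta>)\<close>, which has the same minimal conjugate. Equal heights then mean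
  \<open>\<ell>(t y \<theta>(t)) = \<ell>(y)\<close>; since \<open>\<theta>(y) = y\<^sup>-\<^sup>1\<close> and \<theta> preserves length,
  \<open>\<ell>(y \<theta>(t)) = \<ell>(t y)\<close>, and these two equalities force \<open>t y \<theta>(t) = y\<close>.\<close>

section \<open>Reflection sequences of words\<close>

definition conjugate :: "('w, 'b) monoid_scheme \<Rightarrow> 'w \<Rightarrow> 'w \<Rightarrow> 'w" where
  "conjugate G x r = x \<otimes>\<^bsub>G\<^esub> r \<otimes>\<^bsub>G\<^esub> inv\<^bsub>G\<^esub> x"

fun reflection_seq :: "('w, 'b) monoid_scheme \<Rightarrow> 'w list \<Rightarrow> 'w list" where
  "reflection_seq G [] = []"
| "reflection_seq G (q # ws) = q # map (conjugate G q) (reflection_seq G ws)"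

definition reflection_count :: "('w, 'b) monoid_scheme \<Rightarrow> 'w list \<Rightarrow> 'w \<Rightarrow> nat" where
  "reflection_count G ws t = count_list (reflection_seq G ws) t"

abbreviation alternating_word :: "'a \<Rightarrow> 'a \<Rightarrow> nat \<Rightarrow> 'a list" where
  "alternating_word a b n \<equiv> concat (replicate n [a, b])"

lemma word_prod_Nil [simp]: "word_prod G [] = \<one>\<^bsub>G\<^esub>"
  by (simp add: word_prod_def)

lemma word_prod_Cons [simp]: "word_prod G (q # ws) = q \<otimes>\<^bsub>G\<^esub> word_prod G ws"
  by (simp add: word_prod_def)

lemma alternating_word_Suc: "alternating_word a b (Suc n) = alternating_word a b n @ [a, b]"
  by (metis concat.simps concat_append append_Nil2 replicate_append_same replicate_Suc)

lemma set_alternating_word: "set (alternating_word a b n) \<subseteq> {a, b}"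
  by auto

lemma count_list_distinct: "distinct xs \<Longrightarrow> count_list xs t = (if t \<in> set xs then 1 else 0)"
  by (induction xs) auto

lemma odd_count_list_map_inj_on:
  assumes "inj_on f (set xs)"
  shows "{t. odd (count_list (map f xs) t)} = f ` {u. odd (count_list xs u)}"
proof (intro equalityI subsetI)
  fix t assume odd: "t \<in> {t. odd (count_list (map f xs) t)}"
  then have "t \<in> set (map f xs)"
    using count_notin[of t "map f xs"] by (cases "t \<in> set (map f xs)") simp_all
  then obtain u where u: "u \<in> set xs" "t = f u" by auto
  with odd show "t \<in> f ` {u. odd (count_list xs u)}"
    using count_list_inj_map[OF assms u(1)] by simp
next
  fix t assume "t \<in> f ` {u. odd (count_list xs u)}"
  then obtain u where u: "odd (count_list xs u)" "t = f u" by auto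
  then have "u \<in> set xs"
    using count_notin[of u xs] by (cases "u \<in> set xs") simp_all
  with u show "t \<in> {t. odd (count_list (map f xs) t)}"
    using count_list_inj_map[OF assms] by simp
qed

lemma even_count_list_periodic:
  assumes "\<And>j. f (j + m) = f j"
  shows "even (count_list (map f [0..<2 * m]) t)"
proof -
  have "[0..<2 * m] = [0..<m] @ map (\<lambda>i. i + m) [0..<m]"
    by (simp add: map_add_upt upt_add_eq_append[of 0 m m, simplified] mult_2)
  then have "map f [0..<2 * m] = map f [0..<m] @ map f [0..<m]"
    using assms by simp
  then show ?thesis by simp
qed

context group
begin

lemma word_prod_closed [simp]: "set ws \<subseteq> carrier G \<Longrightarrow> word_prod G ws \<in> carrier G"
  by (induction ws) auto

lemma word_prod_append:
  "set xs \<subseteq> carrier G \<Longrightarrow> set ys \<subseteq> carrier G \<Longrightarrow>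
    word_prod G (xs @ ys) = word_prod G xs \<otimes> word_prod G ys"
  by (induction xs) (auto simp: m_assoc)

lemma word_prod_rev:
  assumes "set ws \<subseteq> carrier G" and "\<forall>q\<in>set ws. q \<otimes> q = \<one>"
  shows "word_prod G (rev ws) = inv (word_prod G ws)"
  using assms
proof (induction ws)
  case (Cons q ws)
  then have "inv q = q" by (simp add: inv_equality)
  with Cons show ?case by (simp add: word_prod_append inv_mult_group)
qed simp

lemma word_prod_alternating:
  "a \<in> carrier G \<Longrightarrow> b \<in> carrier G \<Longrightarrow> word_prod G (alternating_word a b n) = (a \<otimes> b) [^] n"
proof (induction n)
  case (Suc n)
  then have "set (alternating_word a b n) \<subseteq> carrier G" by auto
  with Suc show ?case
    by (simp only: alternating_word_Suc) (simp add: word_prod_append m_assoc)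
qed simp

lemma conjugate_closed [simp]: "x \<in> carrier G \<Longrightarrow> r \<in> carrier G \<Longrightarrow> conjugate G x r \<in> carrier G"
  by (simp add: conjugate_def)

lemma conjugate_conjugate:
  "x \<in> carrier G \<Longrightarrow> y \<in> carrier G \<Longrightarrow> r \<in> carrier G \<Longrightarrow>
    conjugate G x (conjugate G y r) = conjugate G (x \<otimes> y) r"
  by (simp add: conjugate_def m_assoc inv_mult_group)

lemma conjugate_one [simp]: "r \<in> carrier G \<Longrightarrow> conjugate G \<one> r = r"
  by (simp add: conjugate_def)

lemma conjugate_involution_involutive:
  "q \<in> carrier G \<Longrightarrow> q \<otimes> q = \<one> \<Longrightarrow> r \<in> carrier G \<Longrightarrow> conjugate G q (conjugate G q r) = r"
  by (simp add: conjugate_conjugate)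

lemma reflection_seq_closed: "set ws \<subseteq> carrier G \<Longrightarrow> set (reflection_seq G ws) \<subseteq> carrier G"
  by (induction ws) auto

lemma length_reflection_seq [simp]: "length (reflection_seq G ws) = length ws"
  by (induction ws) auto

lemma map_conjugate_one:
  "set xs \<subseteq> carrier G \<Longrightarrow> map (conjugate G \<one>) xs = xs"
  by (induction xs) auto

lemma reflection_seq_append:
  assumes "set xs \<subseteq> carrier G" and "set ys \<subseteq> carrier G"
  shows "reflection_seq G (xs @ ys) =
    reflection_seq G xs @ map (conjugate G (word_prod G xs)) (reflection_seq G ys)"
  using assms(1)
proof (induction xs)
  case Nil
  then show ?case
    using map_conjugate_one[OF reflection_seq_closed[OF assms(2)]] by simp
next
  case (Cons q xs)
  then have "map (conjugate G q) (map (conjugate G (word_prod G xs)) (reflection_seq G ys)) =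
      map (conjugate G (q \<otimes> word_prod G xs)) (reflection_seq G ys)"
    using reflection_seq_closed[OF assms(2)] by (auto simp: conjugate_conjugate)
  with Cons show ?case by simp
qed

lemma reflection_seq_rev:
  assumes "set vs \<subseteq> carrier G" and "\<forall>q\<in>set vs. q \<otimes> q = \<one>"
  shows "reflection_seq G (rev vs) =
    rev (map (conjugate G (inv (word_prod G vs))) (reflection_seq G vs))"
  using assms
proof (induction vs)
  case (Cons q vs)
  let ?v = "word_prod G vs"
  have q: "q \<in> carrier G" "q \<otimes> q = \<one>" "inv q = q"
    using Cons.prems by (auto simp: inv_equality)
  have vc: "?v \<in> carrier G" and rc: "set (reflection_seq G vs) \<subseteq> carrier G"
    using Cons.prems reflection_seq_closed by auto
  have "reflection_seq G (rev (q # vs)) =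
      rev (map (conjugate G (inv ?v)) (reflection_seq G vs)) @ [conjugate G (inv ?v) q]"
    using Cons by (simp add: reflection_seq_append word_prod_rev)
  moreover have "inv (q \<otimes> ?v) = inv ?v \<otimes> q"
    using q vc by (simp add: inv_mult_group)
  moreover have "conjugate G (inv ?v \<otimes> q) q = conjugate G (inv ?v) q"
    using q vc by (simp add: conjugate_def m_assoc inv_mult_group)
  moreover have "map (conjugate G (inv ?v \<otimes> q)) (map (conjugate G q) (reflection_seq G vs)) =
      map (conjugate G (inv ?v)) (reflection_seq G vs)"
    using rc q vc by (auto simp: conjugate_conjugate m_assoc)
  ultimately show ?case by simp
qed simp

lemma involution_conj_inv_pow:
  assumes a: "a \<in> carrier G" "a \<otimes> a = \<one>" and x: "x \<in> carrier G"
    and ax: "a \<otimes> inv x \<otimes> a = x"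
  shows "a \<otimes> inv x [^] (n::nat) \<otimes> a = x [^] n"
proof (induction n)
  case (Suc n)
  have "a \<otimes> inv x [^] Suc n \<otimes> a = (a \<otimes> inv x [^] n \<otimes> a) \<otimes> (a \<otimes> inv x \<otimes> a)"
    using a x by (simp add: m_assoc[symmetric]) (simp add: m_assoc)
  also have "\<dots> = x [^] Suc n" using Suc ax by simp
  finally show ?case .
qed (use a in simp)

lemma reflection_seq_alternating:
  assumes a: "a \<in> carrier G" "a \<otimes> a = \<one>" and b: "b \<in> carrier G" "b \<otimes> b = \<one>"
  shows "reflection_seq G (alternating_word a b n) = map (\<lambda>j. (a \<otimes> b) [^] j \<otimes> a) [0..<2 * n]"
proof (induction n)
  case (Suc n)
  define x where "x = a \<otimes> b"
  have xc: "x \<in> carrier G" using a b by (simp add: x_def)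
  have "inv x = b \<otimes> a"
    using a b by (simp add: x_def inv_mult_group inv_equality)
  then have "a \<otimes> inv x \<otimes> a = x"
    using a b by (simp add: x_def m_assoc)
  then have "a \<otimes> inv x [^] n \<otimes> a = x [^] n"
    using involution_conj_inv_pow[OF a xc] by blast
  then have swap: "a \<otimes> inv x [^] n = x [^] n \<otimes> a"
    using a xc by (metis inv_closed nat_pow_closed m_assoc m_closed r_one)
  have c1: "conjugate G (x [^] n) a = x [^] (2 * n) \<otimes> a"
  proof -
    have "conjugate G (x [^] n) a = x [^] n \<otimes> (a \<otimes> inv x [^] n)"
      using xc a by (simp add: conjugate_def m_assoc nat_pow_inv)
    also have "\<dots> = x [^] n \<otimes> x [^] n \<otimes> a" using swap xc a by (simp add: m_assoc)
    also have "\<dots> = x [^] (2 * n) \<otimes> a" using xc by (simp add: nat_pow_mult mult_2)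
    finally show ?thesis .
  qed
  have c2: "conjugate G (x [^] n) (conjugate G a b) = x [^] Suc (2 * n) \<otimes> a"
  proof -
    have "conjugate G (x [^] n) (conjugate G a b) = x [^] n \<otimes> x \<otimes> (a \<otimes> inv x [^] n)"
      using xc a b by (simp add: conjugate_def m_assoc nat_pow_inv x_def inv_equality)
    also have "\<dots> = x [^] n \<otimes> x \<otimes> x [^] n \<otimes> a" using swap xc a by (simp add: m_assoc)
    also have "\<dots> = x [^] Suc (2 * n) \<otimes> a"
      using xc by (simp add: nat_pow_mult mult_2 nat_pow_Suc2[symmetric])
        (metis nat_pow_Suc nat_pow_mult add_Suc)
    finally show ?thesis .
  qed
  have "set (alternating_word a b n) \<subseteq> carrier G" using a b by auto
  then have "reflection_seq G (alternating_word a b (Suc n)) =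
      reflection_seq G (alternating_word a b n) @ map (conjugate G (x [^] n)) [a, conjugate G a b]"
    using a b by (simp only: alternating_word_Suc)
      (simp add: reflection_seq_append word_prod_alternating x_def)
  also have "\<dots> = map (\<lambda>j. x [^] j \<otimes> a) [0..<2 * Suc n]"
    using Suc c1 c2 by (simp add: x_def)
  finally show ?case by (simp add: x_def)
qed simp

lemma even_count_reflection_seq_relator:
  assumes "a \<in> carrier G" "a \<otimes> a = \<one>" "b \<in> carrier G" "b \<otimes> b = \<one>"
  shows "even (count_list (map h (reflection_seq G (alternating_word a b (ord (a \<otimes> b))))) t)"
proof -
  have "(a \<otimes> b) [^] (j + ord (a \<otimes> b)) \<otimes> a = (a \<otimes> b) [^] j \<otimes> a" for j
    using assms by (simp add: nat_pow_mult[symmetric])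
  then show ?thesis
    using even_count_list_periodic[of "\<lambda>j. h ((a \<otimes> b) [^] j \<otimes> a)"]
    by (simp add: reflection_seq_alternating[OF assms] o_def)
qed

end

section \<open>Reflection counts, inversion sets and lengths\<close>

locale coxeter = group G for G :: "('w, 'b) monoid_scheme" (structure) +
  fixes S :: "'w set"
  assumes coxeter_system: "coxeter_system G S"
begin

abbreviation len :: "'w \<Rightarrow> nat" where
  "len x \<equiv> cox_length G S x"

lemma simple_closed: "s \<in> S \<Longrightarrow> s \<in> carrier G"
  using coxeter_system by (auto simp: coxeter_system_def)

lemma simple_square: "s \<in> S \<Longrightarrow> s \<otimes> s = \<one>"
  using coxeter_system by (simp add: coxeter_system_def)

lemma simple_inv: "s \<in> S \<Longrightarrow> inv s = s"
  using simple_square simple_closed by (auto intro: inv_equality)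

lemma conjugate_simple_self: "s \<in> S \<Longrightarrow> conjugate G s s = s"
  by (simp add: conjugate_def simple_inv simple_square simple_closed)

lemma words_closed: "ws \<in> lists S \<Longrightarrow> set ws \<subseteq> carrier G"
  using simple_closed by auto

lemma cox_relator_props:
  assumes "r \<in> cox_relators G S"
  shows "r \<in> lists S" and "word_prod G r = \<one>"
    and "even (count_list (map h (reflection_seq G r)) t)"
proof -
  from assms consider (square) s where "r = [s, s]" "s \<in> S"
    | (braid) a b where "r = alternating_word a b (ord (a \<otimes> b))" "a \<in> S" "b \<in> S"
    unfolding cox_relators_def by blast
  then have "r \<in> lists S \<and> word_prod G r = \<one> \<and> even (count_list (map h (reflection_seq G r)) t)"
  proof cases
    case square
    then show ?thesis by (simp add: simple_square simple_closed conjugate_simple_self)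
  next
    case braid
    have "r \<in> lists S"
      using braid set_alternating_word[of _ a b] by blast
    then show ?thesis
      using braid even_count_reflection_seq_relator[of a b h t]
      by (simp add: simple_closed simple_square word_prod_alternating)
  qed
  then show "r \<in> lists S" "word_prod G r = \<one>" "even (count_list (map h (reflection_seq G r)) t)"
    by blast+
qed

lemma cox_step_count_parity:
  assumes "cox_step G S u v" and "u \<in> lists S \<or> v \<in> lists S"
  shows "u \<in> lists S \<and> v \<in> lists S \<and> even (reflection_count G u t + reflection_count G v t)"
proof -
  obtain xs ys r where r: "r \<in> cox_relators G S" and u: "u = xs @ ys" and v: "v = xs @ r @ ys"
    using assms(1) unfolding cox_step_def by blast
  note R = cox_relator_props[OF r]
  have words: "xs \<in> lists S" "ys \<in> lists S"
    using assms(2) u v R by auto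
  then have c: "set xs \<subseteq> carrier G" "set ys \<subseteq> carrier G" "set r \<subseteq> carrier G"
    using R words_closed by auto
  have "reflection_seq G v = reflection_seq G xs
      @ map (conjugate G (word_prod G xs)) (reflection_seq G r)
      @ map (conjugate G (word_prod G xs)) (reflection_seq G ys)"
    using c R(2) map_conjugate_one[OF reflection_seq_closed[OF c(2)]]
    by (simp add: v reflection_seq_append word_prod_append del: map_map)
  moreover have "reflection_seq G u =
      reflection_seq G xs @ map (conjugate G (word_prod G xs)) (reflection_seq G ys)"
    using c by (simp add: u reflection_seq_append)
  ultimately have "reflection_count G v t = reflection_count G u t
      + count_list (map (conjugate G (word_prod G xs)) (reflection_seq G r)) t"
    by (simp add: reflection_count_def)
  then show ?thesis
    using words R(1) R(3)[of "conjugate G (word_prod G xs)" t] u v by auto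
qed

lemma cox_equiv_count_parity:
  assumes "cox_equiv G S u v" and "u \<in> lists S"
  shows "v \<in> lists S \<and> even (reflection_count G u t + reflection_count G v t)"
  using assms unfolding cox_equiv_def
proof (induction rule: rtranclp_induct)
  case (step y z)
  then have y: "y \<in> lists S" "even (reflection_count G u t + reflection_count G y t)"
    by auto
  have "z \<in> lists S \<and> even (reflection_count G y t + reflection_count G z t)"
    using step(2) y(1) cox_step_count_parity[of y z t] cox_step_count_parity[of z y t]
    by (auto simp: add.commute)
  then show ?case using y by auto
qed simp

lemma reflection_count_parity:
  assumes ws: "ws \<in> lists S" and vs: "vs \<in> lists S" and eq: "word_prod G ws = word_prod G vs"
  shows "even (reflection_count G ws t + reflection_count G vs t)"
proof -
  have c: "set ws \<subseteq> carrier G" "set vs \<subseteq> carrier G"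
    using ws vs words_closed by auto
  have sq: "\<forall>q\<in>set vs. q \<otimes> q = \<one>"
    using vs simple_square by auto
  have "ws @ rev vs \<in> lists S" using ws vs by auto
  moreover have "word_prod G (ws @ rev vs) = \<one>"
    using c eq sq by (simp add: word_prod_append word_prod_rev)
  ultimately have "cox_equiv G S (ws @ rev vs) []"
    using coxeter_system by (simp add: coxeter_system_def)
  then have "even (reflection_count G (ws @ rev vs) t)"
    using cox_equiv_count_parity \<open>ws @ rev vs \<in> lists S\<close>
    by (fastforce simp: reflection_count_def)
  moreover have "map (conjugate G (word_prod G vs))
      (map (conjugate G (inv (word_prod G vs))) (reflection_seq G vs)) = reflection_seq G vs"
    using reflection_seq_closed[OF c(2)] c by (auto simp: conjugate_conjugate intro!: map_idI)
  then have "reflection_count G (ws @ rev vs) t = reflection_count G ws t + reflection_count G vs t"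
    using c sq eq
    by (simp add: reflection_count_def reflection_seq_append reflection_seq_rev rev_map[symmetric])
  ultimately show ?thesis by simp
qed

lemma word_exists:
  assumes "T \<subseteq> S" and "x \<in> generate G T"
  shows "\<exists>ws\<in>lists T. word_prod G ws = x"
  using assms(2)
proof (induction rule: generate.induct)
  case one
  show ?case by (intro bexI[of _ "[]"]) auto
next
  case (incl h)
  then show ?case using assms(1) simple_closed by (intro bexI[of _ "[h]"]) auto
next
  case (inv h)
  then have "inv h = h" using assms(1) simple_inv by auto
  then show ?case using inv assms(1) simple_closed by (intro bexI[of _ "[h]"]) auto
next
  case (eng h1 h2)
  then obtain w1 w2 where "w1 \<in> lists T" "w2 \<in> lists T" "word_prod G w1 = h1" "word_prod G w2 = h2"
    by blast
  moreover have "set w1 \<subseteq> carrier G" "set w2 \<subseteq> carrier G"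
    using calculation assms(1) simple_closed by auto
  ultimately show ?case by (intro bexI[of _ "w1 @ w2"]) (auto simp: word_prod_append)
qed

lemma length_le_word: "ws \<in> lists S \<Longrightarrow> len (word_prod G ws) \<le> length ws"
  unfolding cox_length_def by (rule Least_le) blast

lemma reduced_word_exists:
  assumes "x \<in> carrier G"
  shows "\<exists>ws\<in>lists S. length ws = len x \<and> word_prod G ws = x"
proof -
  have "\<exists>ws\<in>lists S. word_prod G ws = x"
    using word_exists[of S x] assms coxeter_system by (simp add: coxeter_system_def)
  then have "\<exists>n. \<exists>ws\<in>lists S. length ws = n \<and> word_prod G ws = x" by blast
  then show ?thesis
    unfolding cox_length_def by (rule LeastI_ex)
qed

text \<open>The deletion form of the exchange property.\<close>

lemma reflection_seq_deletion:
  "ws \<in> lists S \<Longrightarrow> r \<in> set (reflection_seq G ws) \<Longrightarrow>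
    \<exists>vs\<in>lists S. Suc (length vs) = length ws \<and> r \<otimes> word_prod G ws = word_prod G vs"
proof (induction ws arbitrary: r)
  case (Cons q ws)
  have q: "q \<in> carrier G" "q \<otimes> q = \<one>" "q \<in> S"
    using Cons.prems simple_closed simple_square by auto
  have wc: "set ws \<subseteq> carrier G" using Cons.prems words_closed by auto
  from Cons.prems(2) consider "r = q" | r' where "r' \<in> set (reflection_seq G ws)" "r = conjugate G q r'"
    by auto
  then show ?case
  proof cases
    case 1
    then have "r \<otimes> word_prod G (q # ws) = word_prod G ws"
      using q wc by (simp add: m_assoc[symmetric])
    then show ?thesis using Cons.prems by (intro bexI[of _ ws]) auto
  next
    case 2
    obtain vs where vs: "vs \<in> lists S" "Suc (length vs) = length ws"
      "r' \<otimes> word_prod G ws = word_prod G vs"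
      using Cons.IH[OF _ 2(1)] Cons.prems by auto
    have "r' \<in> carrier G" using 2 reflection_seq_closed[OF wc] by auto
    then have "r \<otimes> word_prod G (q # ws) = q \<otimes> (r' \<otimes> word_prod G ws)"
      using 2 q wc simple_inv by (simp add: conjugate_def m_assoc) (simp add: m_assoc[symmetric])
    then show ?thesis using vs q by (intro bexI[of _ "q # vs"]) auto
  qed
qed simp

definition reduced :: "'w list \<Rightarrow> bool" where
  "reduced ws \<longleftrightarrow> ws \<in> lists S \<and> length ws = len (word_prod G ws)"

lemma reduced_Cons: "reduced (q # ws) \<Longrightarrow> reduced ws"
proof -
  assume red: "reduced (q # ws)"
  then have ws: "ws \<in> lists S" "q \<in> S" by (auto simp: reduced_def)
  obtain vs where vs: "vs \<in> lists S" "length vs = len (word_prod G ws)"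
    "word_prod G vs = word_prod G ws"
    using reduced_word_exists[of "word_prod G ws"] ws(1) words_closed by auto
  have "length (q # ws) \<le> length (q # vs)"
    using red length_le_word[of "q # vs"] vs ws by (simp add: reduced_def)
  then show "reduced ws"
    using ws(1) vs(2) length_le_word[OF ws(1)] by (simp add: reduced_def)
qed

lemma conjugate_simple_eq_self:
  assumes "q \<in> S" and "r \<in> carrier G" and "conjugate G q r = q"
  shows "r = q"
proof -
  have "conjugate G q (conjugate G q r) = r"
    using assms(1,2) by (simp add: conjugate_involution_involutive simple_closed simple_square)
  then have "r = conjugate G q q"
    using assms(3) by simp
  also have "\<dots> = q"
    using assms(1) by (rule conjugate_simple_self)
  finally show ?thesis .
qed

lemma inj_on_conjugate_simple: "q \<in> S \<Longrightarrow> inj_on (conjugate G q) (carrier G)"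
  by (rule inj_onI) (metis conjugate_involution_involutive simple_closed simple_square)

lemma reduced_reflection_seq_distinct: "reduced ws \<Longrightarrow> distinct (reflection_seq G ws)"
proof (induction ws)
  case (Cons q ws)
  have q: "q \<in> S" "ws \<in> lists S" using Cons.prems by (auto simp: reduced_def)
  have rc: "set (reflection_seq G ws) \<subseteq> carrier G"
    using reflection_seq_closed words_closed q by auto
  have "distinct (map (conjugate G q) (reflection_seq G ws))"
    using Cons.IH reduced_Cons[OF Cons.prems] inj_on_conjugate_simple[OF q(1)] rc
    by (simp add: distinct_map inj_on_subset)
  moreover have "q \<notin> set (map (conjugate G q) (reflection_seq G ws))"
  proof
    assume "q \<in> set (map (conjugate G q) (reflection_seq G ws))"
    then obtain r where r: "r \<in> set (reflection_seq G ws)" "conjugate G q r = q"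
      by auto
    then have "q \<in> set (reflection_seq G ws)"
      using conjugate_simple_eq_self[OF q(1), of r] rc by auto
    then obtain vs where "vs \<in> lists S" "Suc (length vs) = length ws"
      "q \<otimes> word_prod G ws = word_prod G vs"
      using reflection_seq_deletion[OF q(2)] by blast
    then show False
      using Cons.prems length_le_word by (fastforce simp: reduced_def)
  qed
  ultimately show ?case by simp
qed simp

definition reduced_word :: "'w \<Rightarrow> 'w list" where
  "reduced_word x = (SOME ws. ws \<in> lists S \<and> length ws = len x \<and> word_prod G ws = x)"

lemma reduced_word:
  assumes "x \<in> carrier G"
  shows "reduced_word x \<in> lists S" and "length (reduced_word x) = len x"
    and "word_prod G (reduced_word x) = x"
proof -
  have "\<exists>ws. ws \<in> lists S \<and> length ws = len x \<and> word_prod G ws = x"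
    using reduced_word_exists[OF assms] by blast
  then have "reduced_word x \<in> lists S \<and> length (reduced_word x) = len x \<and>
      word_prod G (reduced_word x) = x"
    unfolding reduced_word_def by (rule someI_ex)
  then show "reduced_word x \<in> lists S" "length (reduced_word x) = len x"
    "word_prod G (reduced_word x) = x" by blast+
qed

lemma reduced_reduced_word: "x \<in> carrier G \<Longrightarrow> reduced (reduced_word x)"
  using reduced_word by (simp add: reduced_def)

text \<open>The set \<open>N(x)\<close> of reflections \<open>t\<close> with \<open>\<ell>(tx) < \<ell>(x)\<close>, introduced through the
  reflection sequence of a reduced word; by the parity lemma any word for \<open>x\<close> computes it.\<close>

definition inversion_set :: "'w \<Rightarrow> 'w set" where
  "inversion_set x = set (reflection_seq G (reduced_word x))"

lemma inversion_set_iff_odd_count: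
  assumes ws: "ws \<in> lists S" and x: "word_prod G ws = x"
  shows "t \<in> inversion_set x \<longleftrightarrow> odd (reflection_count G ws t)"
proof -
  have xc: "x \<in> carrier G" using word_prod_closed[OF words_closed[OF ws]] x by simp
  have "even (reflection_count G (reduced_word x) t + reflection_count G ws t)"
    using reflection_count_parity[OF reduced_word(1)[OF xc] ws] reduced_word(3)[OF xc] x by simp
  moreover have "reflection_count G (reduced_word x) t = (if t \<in> inversion_set x then 1 else 0)"
    using count_list_distinct[OF reduced_reflection_seq_distinct[OF reduced_reduced_word[OF xc]]]
    by (simp add: reflection_count_def inversion_set_def)
  ultimately show ?thesis by (cases "t \<in> inversion_set x") auto
qed

lemma inversion_set_eq_odd_count:
  "ws \<in> lists S \<Longrightarrow> word_prod G ws = x \<Longrightarrow>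
    inversion_set x = {t. odd (count_list (reflection_seq G ws) t)}"
  using inversion_set_iff_odd_count by (auto simp: reflection_count_def)

lemma inversion_set_subset_reflection_seq:
  "ws \<in> lists S \<Longrightarrow> word_prod G ws = x \<Longrightarrow> inversion_set x \<subseteq> set (reflection_seq G ws)"
  using inversion_set_eq_odd_count count_notin by fastforce

lemma finite_inversion_set [simp]: "finite (inversion_set x)"
  by (simp add: inversion_set_def)

lemma card_inversion_set: "x \<in> carrier G \<Longrightarrow> card (inversion_set x) = len x"
  using distinct_card[OF reduced_reflection_seq_distinct[OF reduced_reduced_word]] reduced_word
  by (simp add: inversion_set_def)

lemma inversion_set_closed: "x \<in> carrier G \<Longrightarrow> inversion_set x \<subseteq> carrier G"
  using reduced_word reflection_seq_closed words_closed by (simp add: inversion_set_def)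

lemma inversion_set_mult_simple_right:
  assumes x: "x \<in> carrier G" and r: "r \<in> S"
  shows "t \<in> inversion_set (x \<otimes> r) \<longleftrightarrow> (t \<in> inversion_set x) \<noteq> (t = conjugate G x r)"
proof -
  have c: "set (reduced_word x) \<subseteq> carrier G" "r \<in> carrier G"
    using reduced_word(1)[OF x] words_closed simple_closed r by auto
  have xr: "reduced_word x @ [r] \<in> lists S" "word_prod G (reduced_word x @ [r]) = x \<otimes> r"
    using reduced_word[OF x] r c by (auto simp: word_prod_append)
  have "reflection_count G (reduced_word x @ [r]) t =
      reflection_count G (reduced_word x) t + (if conjugate G x r = t then 1 else 0)"
    using c reduced_word(3)[OF x] by (simp add: reflection_count_def reflection_seq_append)
  then show ?thesis
    using inversion_set_iff_odd_count[OF xr, of t]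
      inversion_set_iff_odd_count[OF reduced_word(1,3)[OF x], of t] by auto
qed

lemma inversion_set_mult_simple_left:
  assumes x: "x \<in> carrier G" and r: "r \<in> S"
  shows "t \<in> inversion_set (r \<otimes> x) \<longleftrightarrow> (t = r) \<noteq> (t \<in> conjugate G r ` inversion_set x)"
proof -
  let ?ws = "reduced_word x"
  have c: "set (reflection_seq G ?ws) \<subseteq> carrier G"
    using reflection_seq_closed reduced_word(1)[OF x] words_closed by auto
  have "distinct (map (conjugate G r) (reflection_seq G ?ws))"
    using reduced_reflection_seq_distinct[OF reduced_reduced_word[OF x]]
      inj_on_subset[OF inj_on_conjugate_simple[OF r] c] by (simp add: distinct_map)
  then have "count_list (map (conjugate G r) (reflection_seq G ?ws)) t =
      (if t \<in> conjugate G r ` inversion_set x then 1 else 0)"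
    by (simp add: inversion_set_def count_list_distinct)
  moreover have "reflection_count G (r # ?ws) t =
      (if r = t then 1 else 0) + count_list (map (conjugate G r) (reflection_seq G ?ws)) t"
    by (simp add: reflection_count_def)
  ultimately have "reflection_count G (r # ?ws) t =
      (if t = r then 1 else 0) + (if t \<in> conjugate G r ` inversion_set x then 1 else 0)"
    by (simp only: eq_commute[of r t])
  moreover have "r # ?ws \<in> lists S" "word_prod G (r # ?ws) = r \<otimes> x"
    using reduced_word[OF x] r by auto
  ultimately show ?thesis
    using inversion_set_iff_odd_count[of "r # ?ws" "r \<otimes> x" t] by simp
qed

lemma conjugate_mem_inversion_set_mult_simple_left:
  assumes x: "x \<in> carrier G" and r: "r \<in> S"
    and c: "c \<in> inversion_set (r \<otimes> x)" "c \<noteq> r"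
  shows "conjugate G r c \<in> inversion_set x"
proof -
  obtain u where u: "u \<in> inversion_set x" "c = conjugate G r u"
    using inversion_set_mult_simple_left[OF x r, of c] c by auto
  then have "conjugate G r c = u"
    using inversion_set_closed[OF x] r simple_closed simple_square
    by (auto simp: conjugate_involution_involutive)
  with u show ?thesis by simp
qed

lemma length_mult_simple_right:
  assumes x: "x \<in> carrier G" and r: "r \<in> S"
  shows "conjugate G x r \<in> inversion_set x \<Longrightarrow> Suc (len (x \<otimes> r)) = len x"
    and "conjugate G x r \<notin> inversion_set x \<Longrightarrow> len (x \<otimes> r) = Suc (len x)"
proof -
  let ?c = "conjugate G x r"
  have xr: "x \<otimes> r \<in> carrier G" using x r simple_closed by simp
  have N: "inversion_set (x \<otimes> r) =
      (if ?c \<in> inversion_set x then inversion_set x - {?c} else insert ?c (inversion_set x))"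
    by (cases "?c \<in> inversion_set x") (auto simp: inversion_set_mult_simple_right[OF x r])
  show "Suc (len (x \<otimes> r)) = len x" if "?c \<in> inversion_set x"
  proof -
    have "card (inversion_set x) > 0"
      using that by (auto simp: card_gt_0_iff)
    then show ?thesis
      using that N card_inversion_set[OF x] card_inversion_set[OF xr] by simp
  qed
  show "?c \<notin> inversion_set x \<Longrightarrow> len (x \<otimes> r) = Suc (len x)"
    using N card_inversion_set[OF x] card_inversion_set[OF xr] by simp
qed

lemma length_mult_simple_left:
  assumes x: "x \<in> carrier G" and r: "r \<in> S"
  shows "r \<in> inversion_set x \<Longrightarrow> Suc (len (r \<otimes> x)) = len x"
    and "r \<notin> inversion_set x \<Longrightarrow> len (r \<otimes> x) = Suc (len x)"
proof -
  define B where "B = conjugate G r ` inversion_set x"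
  have rx: "r \<otimes> x \<in> carrier G" using x r simple_closed by simp
  have rB: "r \<in> B \<longleftrightarrow> r \<in> inversion_set x"
    unfolding B_def using inj_on_image_mem_iff[OF inj_on_conjugate_simple[OF r] simple_closed[OF r]
        inversion_set_closed[OF x]] conjugate_simple_self[OF r] by simp
  have cB: "card B = len x"
    unfolding B_def
    using card_image[OF inj_on_subset[OF inj_on_conjugate_simple[OF r] inversion_set_closed[OF x]]]
      card_inversion_set[OF x] by simp
  have fB: "finite B" unfolding B_def by simp
  have N: "inversion_set (r \<otimes> x) = (if r \<in> B then B - {r} else insert r B)"
    by (cases "r \<in> B") (auto simp: inversion_set_mult_simple_left[OF x r, folded B_def])
  show "Suc (len (r \<otimes> x)) = len x" if "r \<in> inversion_set x"
  proof -
    have "card B > 0"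
      using that rB fB by (auto simp: card_gt_0_iff)
    then show ?thesis
      using that rB N cB fB card_inversion_set[OF rx] by simp
  qed
  show "r \<notin> inversion_set x \<Longrightarrow> len (r \<otimes> x) = Suc (len x)"
    using N rB cB fB card_inversion_set[OF rx] by simp
qed

lemma length_mult_simple_left_neq:
  assumes "x \<in> carrier G" and "r \<in> S"
  shows "len (r \<otimes> x) \<noteq> len x"
proof (cases "r \<in> inversion_set x")
  case True
  then show ?thesis using length_mult_simple_left(1)[OF assms] by simp
next
  case False
  then show ?thesis using length_mult_simple_left(2)[OF assms] by simp
qed

lemma length_inv_le:
  assumes "x \<in> carrier G"
  shows "len (inv x) \<le> len x"
proof -
  note ws = reduced_word[OF assms]
  have "word_prod G (rev (reduced_word x)) = inv x"
    using word_prod_rev[OF words_closed[OF ws(1)]] ws(1,3) simple_square by auto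
  moreover have "rev (reduced_word x) \<in> lists S"
    using ws(1) by auto
  ultimately show ?thesis
    using length_le_word[of "rev (reduced_word x)"] ws(2) by simp
qed

lemma length_inv: "x \<in> carrier G \<Longrightarrow> len (inv x) = len x"
  using length_inv_le[of x] length_inv_le[of "inv x"] by simp

lemma twisted_fixed_of_conjugate_eq:
  assumes y: "y \<in> carrier G" and r: "r \<in> S" and "conjugate G y r = t"
  shows "t \<otimes> y \<otimes> r = y"
proof -
  have rc: "r \<in> carrier G" using r simple_closed by auto
  have "t \<otimes> y \<otimes> r = y \<otimes> r \<otimes> inv y \<otimes> y \<otimes> r" using assms(3) by (simp add: conjugate_def)
  also have "\<dots> = y \<otimes> (r \<otimes> r)" using y rc by (simp add: m_assoc)
  also have "\<dots> = y" using simple_square[OF r] y by simp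
  finally show ?thesis .
qed

lemma conjugate_mult_simple_left:
  "s \<in> S \<Longrightarrow> w \<in> carrier G \<Longrightarrow> r \<in> carrier G \<Longrightarrow>
    conjugate G s (conjugate G (s \<otimes> w) r) = conjugate G w r"
  using simple_closed simple_square by (simp add: conjugate_conjugate m_assoc[symmetric])

lemma deodhar_lemma:
  assumes w: "w \<in> carrier G" and s: "s \<in> S" and r: "r \<in> S"
    and wr: "len w < len (w \<otimes> r)" and swr: "len (s \<otimes> w \<otimes> r) \<le> len (s \<otimes> w)"
  shows "inv w \<otimes> s \<otimes> w = r"
proof -
  have sc: "s \<in> carrier G" and rc: "r \<in> carrier G" using s r simple_closed by auto
  let ?y = "s \<otimes> w"
  have yc: "?y \<in> carrier G" using sc w by auto
  have cN: "conjugate G ?y r \<in> inversion_set ?y"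
    using length_mult_simple_right(2)[OF yc r] swr by auto
  have cs: "conjugate G s (conjugate G ?y r) = conjugate G w r"
    using conjugate_mult_simple_left[OF s w rc] .
  show ?thesis
  proof (cases "conjugate G ?y r = s")
    case True
    then have "conjugate G w r = s" using cs conjugate_simple_self[OF s] by simp
    then have "w \<otimes> r \<otimes> inv w = s" by (simp add: conjugate_def)
    then have "inv w \<otimes> s \<otimes> w = inv w \<otimes> (w \<otimes> r \<otimes> inv w) \<otimes> w" by simp
    also have "\<dots> = r" using w rc by (simp add: m_assoc[symmetric]) (simp add: m_assoc)
    finally show ?thesis .
  next
    case False
    then have "conjugate G w r \<in> inversion_set w"
      using conjugate_mem_inversion_set_mult_simple_left[OF w s cN] cs by simp
    then show ?thesis using length_mult_simple_right(1)[OF w r] wr by simp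
  qed
qed

lemma twisted_conjugate_eq_self:
  assumes y: "y \<in> carrier G" and t: "t \<in> S" and t': "t' \<in> S"
    and eq_len: "len (y \<otimes> t') = len (t \<otimes> y)" and same: "len (t \<otimes> y \<otimes> t') = len y"
  shows "t \<otimes> y \<otimes> t' = y"
proof -
  have tc: "t \<in> carrier G" and t'c: "t' \<in> carrier G" using t t' simple_closed by auto
  have tyc: "t \<otimes> y \<in> carrier G" and yt: "y \<otimes> t' \<in> carrier G" using tc t'c y by auto
  show ?thesis
  proof (cases "t \<in> inversion_set y")
    case False
    then have l1: "len (t \<otimes> y) = Suc (len y)" using length_mult_simple_left(2)[OF y t] by simp
    have cN: "conjugate G (t \<otimes> y) t' \<in> inversion_set (t \<otimes> y)"
      using length_mult_simple_right(2)[OF tyc t'] l1 same by auto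
    have cc: "conjugate G t (conjugate G (t \<otimes> y) t') = conjugate G y t'"
      using conjugate_mult_simple_left[OF t y t'c] .
    show ?thesis
    proof (cases "conjugate G (t \<otimes> y) t' = t")
      case True
      then have "conjugate G y t' = t" using cc conjugate_simple_self[OF t] by simp
      then show ?thesis using twisted_fixed_of_conjugate_eq[OF y t'] by simp
    next
      case False
      then have "conjugate G y t' \<in> inversion_set y"
        using conjugate_mem_inversion_set_mult_simple_left[OF y t cN] cc by simp
      then have "Suc (len (y \<otimes> t')) = len y" using length_mult_simple_right(1)[OF y t'] by simp
      then show ?thesis using eq_len l1 by simp
    qed
  next
    case True
    then have l1: "Suc (len (t \<otimes> y)) = len y" using length_mult_simple_left(1)[OF y t] by simp
    then have "conjugate G y t' \<in> inversion_set y"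
      using length_mult_simple_right(2)[OF y t'] eq_len by auto
    then have l2: "Suc (len (y \<otimes> t')) = len y" using length_mult_simple_right(1)[OF y t'] by simp
    have "t \<otimes> (y \<otimes> t') = t \<otimes> y \<otimes> t'" using tc y t'c by (simp add: m_assoc)
    then have "t \<notin> inversion_set (y \<otimes> t')"
      using length_mult_simple_left(1)[OF yt t] l2 same by auto
    then have "t = conjugate G y t'" using inversion_set_mult_simple_right[OF y t', of t] True by auto
    then show ?thesis using twisted_fixed_of_conjugate_eq[OF y t'] by simp
  qed
qed

end

section \<open>Diagram automorphisms of a standard parabolic subgroup\<close>

locale diagram_automorphism = coxeter +
  fixes J and \<theta>
  assumes J_subset: "J \<subseteq> S" and diagram_aut: "\<theta> \<in> diagram_auts G J"
begin

lemma parabolic_subgroup: "subgroup (parabolic G J) G"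
  using J_subset simple_closed by (auto simp: parabolic_def intro!: generate_is_subgroup)

lemma simple_in_parabolic: "t \<in> J \<Longrightarrow> t \<in> parabolic G J"
  by (simp add: parabolic_def generate.incl)

lemma parabolic_closed: "a \<in> parabolic G J \<Longrightarrow> a \<in> carrier G"
  using subgroup.subset[OF parabolic_subgroup] by blast

lemma aut_hom:
  "\<theta> \<in> hom (G\<lparr>carrier := parabolic G J\<rparr>) (G\<lparr>carrier := parabolic G J\<rparr>)"
  using diagram_aut by (simp add: diagram_auts_def iso_def)

sublocale aut: group_hom "G\<lparr>carrier := parabolic G J\<rparr>" "G\<lparr>carrier := parabolic G J\<rparr>" \<theta>
  using subgroup_imp_group[OF parabolic_subgroup] aut_hom
  by (simp add: group_hom_def group_hom_axioms_def)

lemma aut_closed: "a \<in> parabolic G J \<Longrightarrow> \<theta> a \<in> parabolic G J"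
  using aut.hom_closed by simp

lemma aut_one: "\<theta> \<one> = \<one>"
  using aut.hom_one by simp

lemma aut_mult: "a \<in> parabolic G J \<Longrightarrow> b \<in> parabolic G J \<Longrightarrow> \<theta> (a \<otimes> b) = \<theta> a \<otimes> \<theta> b"
  using aut.hom_mult by simp

lemma aut_inv: "a \<in> parabolic G J \<Longrightarrow> \<theta> (inv a) = inv (\<theta> a)"
  using aut.hom_inv[of a] aut_closed parabolic_subgroup by simp

lemma inj_on_aut: "inj_on \<theta> (parabolic G J)"
  using diagram_aut by (simp add: diagram_auts_def iso_def bij_betw_def)

lemma aut_simple: "t \<in> J \<Longrightarrow> \<theta> t \<in> J"
  using diagram_aut by (auto simp: diagram_auts_def)

lemma compose_restrict_id_aut: "compose (parabolic G J) (restrict id (parabolic G J)) \<theta> = \<theta>"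
  and compose_aut_restrict_id: "compose (parabolic G J) \<theta> (restrict id (parabolic G J)) = \<theta>"
  using diagram_aut aut_closed
  by (auto simp: diagram_auts_def compose_def extensional_def fun_eq_iff)

lemma aut_conjugate:
  "q \<in> parabolic G J \<Longrightarrow> r \<in> parabolic G J \<Longrightarrow> \<theta> (conjugate G q r) = conjugate G (\<theta> q) (\<theta> r)"
  using subgroup.m_closed[OF parabolic_subgroup] subgroup.m_inv_closed[OF parabolic_subgroup]
  by (simp add: conjugate_def aut_mult aut_inv)

lemma word_prod_parabolic: "ws \<in> lists J \<Longrightarrow> word_prod G ws \<in> parabolic G J"
  by (induction ws) (auto simp: parabolic_def intro: generate.intros)

lemma reflection_seq_parabolic: "ws \<in> lists J \<Longrightarrow> set (reflection_seq G ws) \<subseteq> parabolic G J"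
proof (induction ws)
  case (Cons q ws)
  have "conjugate G q r \<in> parabolic G J" if "r \<in> parabolic G J" for r
    using that Cons.prems simple_in_parabolic
      subgroup.m_closed[OF parabolic_subgroup] subgroup.m_inv_closed[OF parabolic_subgroup]
    by (simp add: conjugate_def)
  with Cons show ?case by (auto simp: simple_in_parabolic)
qed simp

lemma word_prod_map_aut: "ws \<in> lists J \<Longrightarrow> word_prod G (map \<theta> ws) = \<theta> (word_prod G ws)"
  by (induction ws) (auto simp: aut_one aut_mult simple_in_parabolic word_prod_parabolic)

lemma reflection_seq_map_aut:
  "ws \<in> lists J \<Longrightarrow> reflection_seq G (map \<theta> ws) = map \<theta> (reflection_seq G ws)"
proof (induction ws)
  case (Cons q ws)
  then show ?case
    using reflection_seq_parabolic[of ws] by (auto simp: aut_conjugate simple_in_parabolic)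
qed simp

lemma inversion_set_aut:
  assumes "x \<in> parabolic G J"
  shows "inversion_set (\<theta> x) = \<theta> ` inversion_set x"
proof -
  obtain ws where ws: "ws \<in> lists J" "word_prod G ws = x"
    using word_exists[OF J_subset] assms by (auto simp: parabolic_def)
  have "map \<theta> ws \<in> lists J"
    using ws(1) aut_simple by auto
  then have S: "ws \<in> lists S" "map \<theta> ws \<in> lists S"
    using ws(1) lists_mono[OF J_subset] by blast+
  have "inversion_set (\<theta> x) = {t. odd (count_list (map \<theta> (reflection_seq G ws)) t)}"
    using inversion_set_eq_odd_count[OF S(2) word_prod_map_aut[OF ws(1)]] ws(2)
      reflection_seq_map_aut[OF ws(1)] by simp
  then show ?thesis
    using inversion_set_eq_odd_count[OF S(1) ws(2)]
      odd_count_list_map_inj_on[OF inj_on_subset[OF inj_on_aut reflection_seq_parabolic[OF ws(1)]]] by simp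
qed

lemma inversion_set_parabolic:
  assumes "x \<in> parabolic G J"
  shows "inversion_set x \<subseteq> parabolic G J"
proof -
  obtain ws where ws: "ws \<in> lists J" "word_prod G ws = x"
    using word_exists[OF J_subset] assms by (auto simp: parabolic_def)
  then have "ws \<in> lists S"
    using lists_mono[OF J_subset] by blast
  then show ?thesis
    using inversion_set_subset_reflection_seq ws reflection_seq_parabolic by blast
qed

lemma length_aut:
  assumes "x \<in> parabolic G J"
  shows "len (\<theta> x) = len x"
proof -
  have "len (\<theta> x) = card (\<theta> ` inversion_set x)"
    using card_inversion_set[OF parabolic_closed[OF aut_closed[OF assms]]]
      inversion_set_aut[OF assms] by simp
  also have "\<dots> = len x"
    using card_image[OF inj_on_subset[OF inj_on_aut inversion_set_parabolic[OF assms]]]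
      card_inversion_set parabolic_closed assms by simp
  finally show ?thesis .
qed

lemma aut_eq_inv_of_perfect_involution:
  assumes "(y, \<theta>) \<in> perfect_involutions G J"
  shows "\<theta> y = inv y"
proof -
  have y: "y \<in> parabolic G J"
    using assms by (simp add: perfect_involutions_def plus_carrier_def)
  have "y \<otimes> \<theta> y = \<one>"
    using assms by (simp add: perfect_involutions_def plus_mult_def plus_one_def)
  moreover have "y \<in> carrier G" "\<theta> y \<in> carrier G"
    using y aut_closed parabolic_closed by auto
  ultimately show ?thesis
    using inv_comm inv_equality by metis
qed

lemma length_mult_aut_simple:
  assumes y: "y \<in> parabolic G J" and "\<theta> y = inv y" and t: "t \<in> J"
  shows "len (y \<otimes> \<theta> t) = len (t \<otimes> y)"
proof -
  have tP: "t \<in> parabolic G J" and tS: "t \<in> S"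
    using t simple_in_parabolic J_subset by auto
  have iy: "inv y \<in> parabolic G J"
    using subgroup.m_inv_closed[OF parabolic_subgroup y] .
  have "y \<otimes> \<theta> t = \<theta> (inv y \<otimes> t)"
    using aut_mult[OF iy tP] aut_inv[OF y] assms(2) parabolic_closed[OF y] by simp
  then have "len (y \<otimes> \<theta> t) = len (inv y \<otimes> t)"
    using length_aut subgroup.m_closed[OF parabolic_subgroup iy tP] by simp
  also have "\<dots> = len (inv (t \<otimes> y))"
    using parabolic_closed[OF y] simple_closed[OF tS] simple_inv[OF tS] by (simp add: inv_mult_group)
  also have "\<dots> = len (t \<otimes> y)"
    using length_inv parabolic_closed[OF y] simple_closed[OF tS] by simp
  finally show ?thesis .
qed

lemma twisted_act_mult:
  assumes u: "u \<in> parabolic G J" and v: "v \<in> parabolic G J" and y: "y \<in> carrier G"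
  shows "twisted_act G v (twisted_act G u (y, \<theta>)) = twisted_act G (v \<otimes> u) (y, \<theta>)"
proof -
  have "u \<in> carrier G" "v \<in> carrier G" "\<theta> u \<in> carrier G" "\<theta> v \<in> carrier G"
    using u v aut_closed parabolic_closed by auto
  then show ?thesis
    using y aut_mult[OF v u] by (simp add: twisted_act_def m_assoc inv_mult_group)
qed

lemma twisted_act_orbit:
  assumes v: "v \<in> parabolic G J" and y: "y \<in> carrier G"
  shows "(\<exists>u\<in>parabolic G J. z = twisted_act G u (twisted_act G v (y, \<theta>))) \<longleftrightarrow>
    (\<exists>u\<in>parabolic G J. z = twisted_act G u (y, \<theta>))"
proof
  assume "\<exists>u\<in>parabolic G J. z = twisted_act G u (twisted_act G v (y, \<theta>))"
  then obtain u where u: "u \<in> parabolic G J" "z = twisted_act G u (twisted_act G v (y, \<theta>))" ..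
  then have "z = twisted_act G (u \<otimes> v) (y, \<theta>)"
    using twisted_act_mult[OF v u(1) y] by simp
  then show "\<exists>u\<in>parabolic G J. z = twisted_act G u (y, \<theta>)"
    using subgroup.m_closed[OF parabolic_subgroup u(1) v] by blast
next
  assume "\<exists>u\<in>parabolic G J. z = twisted_act G u (y, \<theta>)"
  then obtain u where u: "u \<in> parabolic G J" "z = twisted_act G u (y, \<theta>)" ..
  have uiv: "u \<otimes> inv v \<in> parabolic G J"
    using subgroup.m_inv_closed[OF parabolic_subgroup v]
      subgroup.m_closed[OF parabolic_subgroup u(1)] by auto
  have "u \<otimes> inv v \<otimes> v = u"
    using u(1) v parabolic_closed by (simp add: m_assoc)
  then have "z = twisted_act G (u \<otimes> inv v) (twisted_act G v (y, \<theta>))"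
    using u(2) twisted_act_mult[OF v uiv y] by simp
  then show "\<exists>u\<in>parabolic G J. z = twisted_act G u (twisted_act G v (y, \<theta>))"
    using uiv by blast
qed

lemma min_conj_twisted_act:
  "v \<in> parabolic G J \<Longrightarrow> y \<in> carrier G \<Longrightarrow>
    min_conj G S J (twisted_act G v (y, \<theta>)) = min_conj G S J (y, \<theta>)"
  unfolding min_conj_def by (simp add: twisted_act_orbit)

lemma twisted_act_simple:
  assumes "t \<in> J"
  shows "twisted_act G t (y, \<theta>) = (t \<otimes> y \<otimes> \<theta> t, \<theta>)"
proof -
  have "\<theta> t \<in> S" using aut_simple[OF assms] J_subset by blast
  then show ?thesis by (simp add: twisted_act_def simple_inv)
qed

lemma simple_act_twisted:
  assumes "s \<otimes> w \<notin> min_coset_reps G S J" and "inv w \<otimes> s \<otimes> w \<in> J"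
    and "y \<in> parabolic G J"
  shows "simple_act G S J s (w, (y, \<theta>)) = (w, twisted_act G (inv w \<otimes> s \<otimes> w) (y, \<theta>))"
  using assms compose_restrict_id_aut compose_aut_restrict_id
  by (simp add: simple_act_def Let_def plus_mult_def plus_embed_def twisted_act_simple)

end

section \<open>Height under the action of a simple reflection\<close>

lemma (in coxeter) simple_act_fixed_of_ht_eq:
  assumes J: "J \<subseteq> S" and s: "s \<in> S" and \<tau>: "\<tau> \<in> KJ G S J"
    and ht_eq: "ht G S J (simple_act G S J s \<tau>) = ht G S J \<tau>"
  shows "simple_act G S J s \<tau> = \<tau>"
proof -
  obtain w y \<theta> where \<tau>_eq: "\<tau> = (w, (y, \<theta>))" by (metis prod.exhaust)
  have w: "w \<in> min_coset_reps G S J" and z: "(y, \<theta>) \<in> perfect_involutions G J"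
    using \<tau> by (auto simp: KJ_def \<tau>_eq)
  have wc: "w \<in> carrier G" and sc: "s \<in> carrier G"
    using w s simple_closed by (auto simp: min_coset_reps_def)
  have y: "y \<in> parabolic G J" and "\<theta> \<in> diagram_auts G J"
    using z by (auto simp: perfect_involutions_def plus_carrier_def)
  with J interpret diagram_automorphism G S J \<theta>
    by unfold_locales
  show ?thesis
  proof (cases "s \<otimes> w \<in> min_coset_reps G S J")
    case True
    then have "len (s \<otimes> w) = len w"
      using ht_eq by (simp add: simple_act_def \<tau>_eq ht_def)
    then show ?thesis
      using length_mult_simple_left_neq[OF wc s] by simp
  next
    case False
    then obtain t where t: "t \<in> J" "len (s \<otimes> w \<otimes> t) \<le> len (s \<otimes> w)"
      using sc wc by (auto simp: min_coset_reps_def not_less)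
    moreover have "len w < len (w \<otimes> t)"
      using w t by (simp add: min_coset_reps_def)
    ultimately have "inv w \<otimes> s \<otimes> w = t"
      using deodhar_lemma[OF wc s] J by auto
    then have act: "simple_act G S J s \<tau> = (w, (t \<otimes> y \<otimes> \<theta> t, \<theta>))"
      using simple_act_twisted[OF False _ y] twisted_act_simple t(1) by (simp add: \<tau>_eq)
    have "min_conj G S J (t \<otimes> y \<otimes> \<theta> t, \<theta>) = min_conj G S J (y, \<theta>)"
      using min_conj_twisted_act[of t y] twisted_act_simple[OF t(1)] simple_in_parabolic[OF t(1)]
        parabolic_closed[OF y] by simp
    then have "len (t \<otimes> y \<otimes> \<theta> t) = len y"
      using ht_eq act by (simp add: \<tau>_eq ht_def plus_length_def)
    moreover have "len (y \<otimes> \<theta> t) = len (t \<otimes> y)"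
      using length_mult_aut_simple[OF y aut_eq_inv_of_perfect_involution[OF z] t(1)] .
    ultimately have "t \<otimes> y \<otimes> \<theta> t = y"
      using twisted_conjugate_eq_self parabolic_closed[OF y] t(1) aut_simple J by blast
    then show ?thesis
      using act \<tau>_eq by simp
  qed
qed

theorem mainTheorem9:
  fixes G :: "'w monoid" and S J :: "'w set" and s :: 'w
    and \<tau> :: "'w \<times> ('w \<times> ('w \<Rightarrow> 'w))"
  assumes "coxeter_system G S"
    and "finite (carrier G)"
    and "J \<subseteq> S"
    and "s \<in> S"
    and "\<tau> \<in> KJ G S J"
  shows "ht G S J (simple_act G S J s \<tau>) = ht G S J \<tau> \<longleftrightarrow> simple_act G S J s \<tau> = \<tau>"
proof -
  have "group G" using assms(1) by (simp add: coxeter_system_def)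
  then interpret coxeter G S
    using assms(1) by (intro coxeter.intro coxeter_axioms.intro)
  show ?thesis
    using simple_act_fixed_of_ht_eq[OF assms(3-5)] by auto
qed

end
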